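(* For integers $0\le\ell\le 2n$ and $m\ge0$, let $p_{\ell,m,2n}$ be the weighted number of paths from $(\ell,m)$ to $(2n,0)$. Then \[ \frac{p_{\ell,j,2n}}{j+1}\ge\frac{p_{\ell,k,2n}}{k+1} \] for all integers $0\le j<k\le\ell\le 2n$ with $k-j$ even.
   Context: Paths here use up steps $U=(1,1)$ and down steps $D=(1,-1)$ and never go below $y=0$. An up step starting at $(a,b)$ has weight $(a-b+2)/(a+b+2)$; the weight of a path is the product of the weights of its up steps, and $p_{\ell,m,2n}$ is the sum of the weights of all such paths from $(\ell,m)$ to $(2n,0)$. Equivalently, $p_{2n,m,2n}=\delta_{m,0}$, $p_{\ell,-1,2n}=0$, and $p_{\ell,m,2n}=p_{\ell+1,m-1,2n}+\frac{\ell-m+2}{\ell+m+2}p_{\ell+1,m+1,2n}$ for $\ell<2n$, $m\ge0$. *)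

theory Defs
  imports Complex_Main
begin

(* paux r l m = weighted number of paths from (l,m) to (l+r,0), using up-step
   weight (a-b+2)/(a+b+2) for an up step starting at (a,b). Paths never go below y=0. *)
fun paux :: "nat \<Rightarrow> int \<Rightarrow> int \<Rightarrow> real" where
  "paux 0 l m = (if m = 0 then 1 else 0)"
| "paux (Suc r) l m =
     (if m < 0 then 0
      else (if m = 0 then 0 else paux r (l+1) (m-1))
           + (of_int (l - m + 2) / of_int (l + m + 2)) * paux r (l+1) (m+1))"

definition p :: "int \<Rightarrow> int \<Rightarrow> int \<Rightarrow> real" where
  "p l m N = paux (nat (N - l)) l m"

end

theory Submission imports Defs begin

(* It suffices to compare the columns m and m + 2, by induction on the number of remaining
   steps. Put B = p(l+1, m+1) / (m+2). By induction the outer neighbours satisfy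
   p(l+1, m-1) >= m B and p(l+1, m+3) <= (m+4) B, so one step of the recurrence gives
   p(l, m) / (m+1) >= g(m) B and p(l, m+2) / (m+3) <= g(m+2) B, where g(m) is the factor by
   which one step multiplies the linear profile m + 1. Finally g(m+2) <= g(m) is an
   inequality between explicit rational functions. *)

(* With s = l + 2, the up-step weight from (l, m) is (s - m) / (s + m); for m = 0 the
   missing down step is harmless because its coefficient m vanishes. *)
definition linear_gain :: "real \<Rightarrow> real \<Rightarrow> real" where
  "linear_gain s m = (m + (s - m) / (s + m) * (m + 2)) / (m + 1)"

lemma linear_gain_eq:
  assumes "m + 1 \<noteq> 0" "s + m \<noteq> 0"
  shows "linear_gain s m = 2 * (m * s + s - m) / ((m + 1) * (s + m))"
  using assms unfolding linear_gain_def by (simp add: field_simps)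

lemma linear_gain_mult:
  "m + 1 \<noteq> 0 \<Longrightarrow>
    (m + 1) * linear_gain s m * b = m * b + (s - m) / (s + m) * ((m + 2) * b)"
proof -
  assume "m + 1 \<noteq> 0"
  then have "(m + 1) * linear_gain s m = m + (s - m) / (s + m) * (m + 2)"
    unfolding linear_gain_def by simp
  then show ?thesis
    by (simp add: distrib_right mult.assoc)
qed

lemma linear_gain_antimono:
  fixes m s :: real
  assumes "0 \<le> m" "1 \<le> s"
  shows "linear_gain s (m + 2) \<le> linear_gain s m"
proof -
  have "0 \<le> m^2 * (s - 1)" "m * 1 \<le> m * s"
    using assms by (simp, intro mult_left_mono)
  then have "0 \<le> m^2 * (s - 1) + 4 * m * s - 2 * m + 4 * s"
    using assms by linarith
  then have "(m * s + 3 * s - m - 2) * ((m + 1) * (s + m))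
      \<le> (m * s + s - m) * ((m + 3) * (s + m + 2))"
    by (simp add: algebra_simps power2_eq_square)
  then show ?thesis
    using assms by (simp add: linear_gain_eq divide_simps) (simp add: algebra_simps)
qed

lemma paux_nonneg: "m \<le> l + 2 \<Longrightarrow> 0 \<le> paux r l m"
proof (induction r arbitrary: l m)
  case 0
  then show ?case by simp
next
  case (Suc r)
  show ?case
  proof (cases "m < 0")
    case False
    have "0 \<le> of_int (l - m + 2) / (of_int (l + m + 2) :: real)"
      using Suc.prems False by (intro divide_nonneg_nonneg) auto
    moreover have "0 \<le> paux r (l + 1) (m - 1)" "0 \<le> paux r (l + 1) (m + 1)"
      using Suc.prems by (simp_all add: Suc.IH)
    ultimately show ?thesis
      using False
      by (simp only: paux.simps if_False)
        (intro add_nonneg_nonneg mult_nonneg_nonneg; (assumption | simp))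
  qed simp
qed

lemma paux_ratio_step:
  assumes "0 \<le> m" "m + 2 \<le> l"
  shows "paux r l (m + 2) / of_int (m + 3) \<le> paux r l m / of_int (m + 1)"
  using assms
proof (induction r arbitrary: l m)
  case 0
  then show ?case by simp
next
  case (Suc r)
  define B where "B = paux r (l + 1) (m + 1) / of_int (m + 2)"
  define s where "s = real_of_int l + 2"
  have B_nonneg: "0 \<le> B"
    unfolding B_def using Suc.prems paux_nonneg[of "m + 1" "l + 1" r] by simp
  have down: "of_int m * B \<le> (if m = 0 then 0 else paux r (l + 1) (m - 1))"
  proof (cases "m = 0")
    case False
    then have "paux r (l + 1) (m + 1) / of_int (m + 2) \<le> paux r (l + 1) (m - 1) / of_int m"
      using Suc.IH[of "m - 1" "l + 1"] Suc.prems by (simp add: add.commute)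
    then show ?thesis
      unfolding B_def using False Suc.prems by (simp add: field_simps)
  qed simp
  have up: "paux r (l + 1) (m + 3) \<le> of_int (m + 4) * B"
  proof -
    have "paux r (l + 1) (m + 3) / of_int (m + 4) \<le> B"
      unfolding B_def using Suc.IH[of "m + 1" "l + 1"] Suc.prems by (simp add: add.assoc)
    then show ?thesis using Suc.prems by (simp add: field_simps)
  qed
  have mid: "paux r (l + 1) (m + 1) = (of_int m + 2) * B"
    unfolding B_def using Suc.prems by simp
  have "(of_int m + 1) * linear_gain s (of_int m) * B
      = of_int m * B + (s - of_int m) / (s + of_int m) * ((of_int m + 2) * B)"
    using Suc.prems by (simp add: linear_gain_mult)
  also have "\<dots> \<le> paux (Suc r) l m"
    using down Suc.prems unfolding mid[symmetric] s_def by (simp add: algebra_simps)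
  finally have lower: "(of_int m + 1) * linear_gain s (of_int m) * B \<le> paux (Suc r) l m" .
  have "paux (Suc r) l (m + 2)
      = (of_int m + 2) * B + (s - (of_int m + 2)) / (s + (of_int m + 2)) * paux r (l + 1) (m + 3)"
    using Suc.prems unfolding mid[symmetric] s_def by (simp add: algebra_simps)
  also have "\<dots> \<le> (of_int m + 2) * B
      + (s - (of_int m + 2)) / (s + (of_int m + 2)) * ((of_int m + 4) * B)"
    using up Suc.prems unfolding s_def by (intro add_left_mono mult_left_mono) simp_all
  also have "\<dots> = (of_int m + 3) * linear_gain s (of_int m + 2) * B"
    using linear_gain_mult[of "of_int m + 2" s B] Suc.prems by (simp add: add.assoc)
  finally have upper:
    "paux (Suc r) l (m + 2) \<le> (of_int m + 3) * linear_gain s (of_int m + 2) * B" .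
  have "paux (Suc r) l (m + 2) / of_int (m + 3) \<le> linear_gain s (of_int m + 2) * B"
    using upper Suc.prems by (simp add: pos_divide_le_eq algebra_simps del: paux.simps)
  also have "\<dots> \<le> linear_gain s (of_int m) * B"
    using linear_gain_antimono[of "of_int m" s] Suc.prems B_nonneg unfolding s_def
    by (simp add: mult_right_mono)
  also have "\<dots> \<le> paux (Suc r) l m / of_int (m + 1)"
    using lower Suc.prems by (simp add: pos_le_divide_eq algebra_simps del: paux.simps)
  finally show ?case .
qed

lemma paux_ratio_antimono:
  assumes "0 \<le> j" "j \<le> k" "k \<le> l" "even (k - j)"
  shows "paux r l k / of_int (k + 1) \<le> paux r l j / of_int (j + 1)"
proof -
  have "paux r l (j + 2 * int d) / of_int (j + 2 * int d + 1) \<le> paux r l j / of_int (j + 1)"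
    if "j + 2 * int d \<le> l" for d :: nat
    using that
  proof (induction d)
    case (Suc d)
    have "paux r l (j + 2 * int d + 2) / of_int (j + 2 * int d + 3)
        \<le> paux r l (j + 2 * int d) / of_int (j + 2 * int d + 1)"
      using paux_ratio_step[of "j + 2 * int d" l r] Suc.prems \<open>0 \<le> j\<close>
      by (simp add: add.assoc)
    also have "\<dots> \<le> paux r l j / of_int (j + 1)"
      using Suc by simp
    finally show ?case
      by (simp add: algebra_simps)
  qed simp
  moreover obtain e where "k - j = 2 * e"
    using \<open>even (k - j)\<close> ..
  moreover obtain d :: nat where "e = int d"
    using nonneg_int_cases[of e] \<open>j \<le> k\<close> \<open>k - j = 2 * e\<close> by force
  ultimately show ?thesis
    using assms by (simp add: algebra_simps)
qed

theorem lemma4p5: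
  fixes n l j k :: int
  assumes "0 \<le> j" "j < k" "k \<le> l" "l \<le> 2*n" "even (k - j)"
  shows "p l j (2*n) / of_int (j+1) \<ge> p l k (2*n) / of_int (k+1)"
  unfolding p_def using assms by (intro paux_ratio_antimono) simp_all

end
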